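(* Let $M=(M_{ij})_{1\le i,j\le d}$ be a $d\times d$ real matrix with nonnegative coefficients, acting on row vectors by $x\mapsto xM$. Then $M$ is uniformly positive if and only if for every pair $(i,j)$ with $M_{ij}=0$, either the whole $i$-th row of $M$ is zero or the whole $j$-th column of $M$ is zero.
   Context: Let $C=[0,\infty)^d\setminus\{0\}$ (row vectors), with the coordinatewise order. $M$ is uniformly positive if there exist $A\ge1$ and $h\in C$ such that for every $x\in C$ there is $b(x)\ge0$ with $A^{-1}b(x)h\le xM\le A\,b(x)h$. *)

theory Defs
  imports "HOL-Analysis.Analysis"
begin

definition pos_cone :: "(real ^ 'n) set" where
  "pos_cone = {x. (\<forall>i. 0 \<le> x $ i) \<and> x \<noteq> 0}"

definition uniformly_positive :: "real ^ 'n ^ 'n \<Rightarrow> bool" where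
  "uniformly_positive M \<longleftrightarrow>
     (\<exists>A h. A \<ge> 1 \<and> h \<in> pos_cone \<and>
        (\<forall>x \<in> pos_cone. \<exists>b. b \<ge> 0 \<and>
           (\<forall>j. (1 / A) * b * h $ j \<le> (x v* M) $ j \<and> (x v* M) $ j \<le> A * b * h $ j)))"

end

theory Submission
  imports Defs
begin

text \<open>Testing the defining bounds on a basis vector e_i shows that every nonzero row of M
  is comparable to b h with b > 0, hence has the support of h. So if M_ij = 0 in a nonzero
  row, then h_j = 0, and the upper bound forces the whole j-th column to vanish.
  Conversely, under the zero pattern condition every entry in a nonzero row and a nonzero
  column is positive, so for x \<ge> 0 each nonzero coordinate of xM lies between m b and K b,
  where b is the x-mass on the nonzero rows, m is the least positive entry of M and K bounds
  all entries; one takes h to be the indicator of the nonzero columns.\<close>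

lemma axis_vector_matrix_mult: "axis i (1::real) v* M = M $ i"
  by (simp add: vec_eq_iff vector_matrix_mult_def axis_def if_distrib[of "\<lambda>a. a * _"] cong: if_cong)

lemma vector_matrix_mult_nth: "(x v* M) $ j = (\<Sum>i\<in>UNIV. x $ i * M $ i $ j)"
  by (simp add: vector_matrix_mult_def)

lemma axis_in_pos_cone: "axis i (1::real) \<in> pos_cone"
  by (auto simp: pos_cone_def axis_def vec_eq_iff)

lemma nonneg_of_pos_cone: "x \<in> pos_cone \<Longrightarrow> 0 \<le> x $ i"
  by (simp add: pos_cone_def)

lemma uniformly_positive_zero: "uniformly_positive 0"
proof -
  have "(\<chi> j. (1::real)) \<in> pos_cone"
    by (simp add: pos_cone_def vec_eq_iff)
  then show ?thesis
    unfolding uniformly_positive_def by (force intro: exI[of _ 1])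
qed

lemma uniformly_positiveI:
  fixes M :: "real ^ 'n ^ 'n"
  assumes "0 < c" and h: "h \<in> pos_cone"
    and bounds: "\<forall>x \<in> pos_cone. \<exists>b \<ge> 0.
      \<forall>j. c * b * h $ j \<le> (x v* M) $ j \<and> (x v* M) $ j \<le> C * b * h $ j"
  shows "uniformly_positive M"
proof -
  define A where "A = max 1 (max C (1 / c))"
  have "1 \<le> A" "C \<le> A" "1 / c \<le> A"
    by (auto simp: A_def)
  moreover from \<open>1 / c \<le> A\<close> \<open>1 \<le> A\<close> \<open>0 < c\<close> have "1 / A \<le> c"
    by (simp add: divide_le_eq mult.commute)
  moreover have "b * h $ j \<ge> 0" if "b \<ge> 0" for b j
    using that nonneg_of_pos_cone[OF h] by simp
  ultimately have "(1 / A) * (b * h $ j) \<le> c * (b * h $ j) \<and> C * (b * h $ j) \<le> A * (b * h $ j)"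
    if "b \<ge> 0" for b j
    using that by (intro conjI mult_right_mono) auto
  then have "(1 / A) * b * h $ j \<le> c * b * h $ j \<and> C * b * h $ j \<le> A * b * h $ j"
    if "b \<ge> 0" for b j
    using that by (simp only: mult.assoc)
  with bounds have "\<forall>x \<in> pos_cone. \<exists>b \<ge> 0.
      \<forall>j. (1 / A) * b * h $ j \<le> (x v* M) $ j \<and> (x v* M) $ j \<le> A * b * h $ j"
    by (meson order_trans)
  with \<open>1 \<le> A\<close> h show ?thesis
    unfolding uniformly_positive_def by blast
qed

lemma finite_positive_values_bounded_below:
  fixes f :: "'a::finite \<Rightarrow> real"
  obtains m where "0 < m" "\<And>a. 0 < f a \<Longrightarrow> m \<le> f a"
proof
  let ?P = "insert 1 (f ` {a. 0 < f a})"
  show "0 < Min ?P" by simp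
  show "Min ?P \<le> f a" if "0 < f a" for a
    using that by (intro Min_le) auto
qed

lemma uniformly_positive_zero_entry:
  fixes M :: "real ^ 'n ^ 'n"
  assumes "uniformly_positive M" "M $ i $ j = 0" "M $ i $ k \<noteq> 0"
  shows "M $ l $ j = 0"
proof -
  obtain A h where "A \<ge> 1" and bounds: "\<forall>x \<in> pos_cone. \<exists>b \<ge> 0.
      \<forall>j. (1 / A) * b * h $ j \<le> (x v* M) $ j \<and> (x v* M) $ j \<le> A * b * h $ j"
    using assms(1) unfolding uniformly_positive_def by blast
  have row_bounds: "\<exists>b \<ge> 0. \<forall>j. (1 / A) * b * h $ j \<le> M $ r $ j \<and> M $ r $ j \<le> A * b * h $ j"
    for r
    using bounds[rule_format, OF axis_in_pos_cone[of r]] unfolding axis_vector_matrix_mult .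
  obtain b where "b \<ge> 0"
    and b: "\<forall>j. (1 / A) * b * h $ j \<le> M $ i $ j \<and> M $ i $ j \<le> A * b * h $ j"
    using row_bounds by blast
  have "b \<noteq> 0"
    using b assms(3) by (metis antisym mult_zero_left mult_zero_right)
  with \<open>b \<ge> 0\<close> \<open>A \<ge> 1\<close> have "0 < (1 / A) * b" "0 < A * b"
    by auto
  moreover have "(1 / A) * b * h $ j \<le> 0" "0 \<le> A * b * h $ j"
    using b assms(2) by metis+
  ultimately have "h $ j = 0"
    by (metis antisym mult_le_0_iff zero_le_mult_iff not_le)
  obtain b' where "\<forall>j. (1 / A) * b' * h $ j \<le> M $ l $ j \<and> M $ l $ j \<le> A * b' * h $ j"
    using row_bounds by blast
  with \<open>h $ j = 0\<close> show ?thesis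
    by (metis antisym mult_zero_right)
qed

lemma vector_matrix_mult_nth_bounds:
  fixes x :: "real ^ 'm"
  assumes "\<And>i. 0 \<le> x $ i" and "\<And>i. c * r i \<le> M $ i $ j \<and> M $ i $ j \<le> C * r i"
  shows "c * (\<Sum>i\<in>UNIV. x $ i * r i) \<le> (x v* M) $ j \<and>
    (x v* M) $ j \<le> C * (\<Sum>i\<in>UNIV. x $ i * r i)"
proof -
  have "c * (x $ i * r i) \<le> x $ i * M $ i $ j \<and> x $ i * M $ i $ j \<le> C * (x $ i * r i)" for i
    using mult_left_mono[OF conjunct1[OF assms(2)] assms(1)]
      mult_left_mono[OF conjunct2[OF assms(2)] assms(1)]
    by (simp add: algebra_simps)
  then show ?thesis
    unfolding vector_matrix_mult_nth sum_distrib_left by (auto intro: sum_mono)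
qed

lemma uniformly_positive_if_zero_pattern:
  fixes M :: "real ^ 'n ^ 'n"
  assumes nonneg: "\<forall>i j. 0 \<le> M $ i $ j"
    and pattern: "\<forall>i j. M $ i $ j = 0 \<longrightarrow> (\<forall>k. M $ i $ k = 0) \<or> (\<forall>k. M $ k $ j = 0)"
    and "M $ i0 $ j0 \<noteq> 0"
  shows "uniformly_positive M"
proof -
  obtain m where "0 < m" and m: "\<And>i j. 0 < M $ i $ j \<Longrightarrow> m \<le> M $ i $ j"
    using finite_positive_values_bounded_below[of "\<lambda>(i, j). M $ i $ j"] by auto
  have K: "M $ i $ j \<le> norm M" for i j
    using component_le_norm_cart[of "M $ i" j] Finite_Cartesian_Product.norm_nth_le[of M i] by linarith
  define r where "r i = (if M $ i = 0 then 0 else (1::real))" for i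
  define h where "h = (\<chi> j. if (\<forall>i. M $ i $ j = 0) then 0 else (1::real))"
  have "h \<in> pos_cone"
    using \<open>M $ i0 $ j0 \<noteq> 0\<close> by (auto simp: pos_cone_def h_def vec_eq_iff)
  moreover have "\<forall>x \<in> pos_cone. \<exists>b \<ge> 0.
      \<forall>j. m * b * h $ j \<le> (x v* M) $ j \<and> (x v* M) $ j \<le> norm M * b * h $ j"
  proof
    fix x :: "real ^ 'n"
    assume "x \<in> pos_cone"
    then have x: "0 \<le> x $ i" for i
      by (rule nonneg_of_pos_cone)
    define b where "b = (\<Sum>i\<in>UNIV. x $ i * r i)"
    have "m * b * h $ j \<le> (x v* M) $ j \<and> (x v* M) $ j \<le> norm M * b * h $ j" for j
    proof (cases "\<forall>i. M $ i $ j = 0")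
      case True
      then show ?thesis by (simp add: h_def vector_matrix_mult_nth)
    next
      case False
      have entry: "m * r i \<le> M $ i $ j \<and> M $ i $ j \<le> norm M * r i" for i
      proof (cases "M $ i = 0")
        case False
        with \<open>\<not> (\<forall>i. M $ i $ j = 0)\<close> pattern have "M $ i $ j \<noteq> 0"
          by (auto simp: vec_eq_iff)
        with nonneg m K show ?thesis
          by (simp add: r_def less_le)
      qed (simp add: r_def)
      then have "m * b \<le> (x v* M) $ j" "(x v* M) $ j \<le> norm M * b"
        unfolding b_def using vector_matrix_mult_nth_bounds[OF x] by blast+
      with False show ?thesis by (auto simp: h_def)
    qed
    moreover have "b \<ge> 0"
      unfolding b_def r_def using x by (simp add: sum_nonneg)
    ultimately show "\<exists>b \<ge> 0. \<forall>j. m * b * h $ j \<le> (x v* M) $ j \<and> (x v* M) $ j \<le> norm M * b * h $ j"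
      by blast
  qed
  ultimately show ?thesis
    using \<open>0 < m\<close> by (rule uniformly_positiveI[rotated])
qed

theorem mainTheorem7:
  fixes M :: "real ^ 'n ^ 'n"
  assumes "\<forall>i j. 0 \<le> M $ i $ j"
  shows "uniformly_positive M \<longleftrightarrow>
    (\<forall>i j. M $ i $ j = 0 \<longrightarrow> (\<forall>k. M $ i $ k = 0) \<or> (\<forall>k. M $ k $ j = 0))"
proof
  assume "uniformly_positive M"
  then show "\<forall>i j. M $ i $ j = 0 \<longrightarrow> (\<forall>k. M $ i $ k = 0) \<or> (\<forall>k. M $ k $ j = 0)"
    using uniformly_positive_zero_entry by blast
next
  assume pattern: "\<forall>i j. M $ i $ j = 0 \<longrightarrow> (\<forall>k. M $ i $ k = 0) \<or> (\<forall>k. M $ k $ j = 0)"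
  show "uniformly_positive M"
  proof (cases "M = 0")
    case True
    then show ?thesis using uniformly_positive_zero by simp
  next
    case False
    then obtain i j where "M $ i $ j \<noteq> 0" by (auto simp: vec_eq_iff)
    with assms pattern show ?thesis by (rule uniformly_positive_if_zero_pattern)
  qed
qed

end
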